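(* Let ${\cal C}$ be a semi-degenerate congruence-modular variety and $A\in{\cal C}$ a semiprime algebra. For any nonzero cardinal $\kappa$, the conditions $(iv)_{{\rm Con}(A)}$, $(4)_{\kappa,{\rm Con}(A)}$, $(4)_{<\infty,{\rm Con}(A)}$ and $(4)_{{\rm Con}(A)}$ are equivalent.
   Context: ${\cal C}$ semi-degenerate: no nontrivial member has a one-element subalgebra. ${\rm Con}(A)$: congruence lattice with bounds $\Delta_A,\nabla_A=A^2$; $[\cdot,\cdot]_A$: modular commutator. A congruence $\phi\ne\nabla_A$ is prime if $[\theta,\zeta]_A\subseteq\phi$ implies $\theta\subseteq\phi$ or $\zeta\subseteq\phi$. $\rho_A(\theta)$: intersection of all prime congruences containing $\theta$. $A$ semiprime: $\rho_A(\Delta_A)=\Delta_A$. For a bounded lattice $L$: ${\rm Ann}_L(U)=\{x\in L\mid x\wedge u=0\ \forall u\in U\}$, ${\rm Ann}_L(a)={\rm Ann}_L(\{a\})$, $(V]_L$ the ideal generated by $V$. $(iv)_L$: for all $a,b\in L$, ${\rm Ann}_L(a\wedge b)=({\rm Ann}_L(a)\cup{\rm Ann}_L(b)]_L$. $(4)_{\kappa,L}$: $(iv)_L$ holds and for each $U\subseteq L$ with $|U|\le\kappa$ there is $x\in L$ with ${\rm Ann}_L({\rm Ann}_L(U))={\rm Ann}_L(x)$; $(4)_{<\infty,L}$: the same for all finite $U$; $(4)_L$: the same for all $U\subseteq L$. *)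

theory Defs
  imports Main
begin

text \<open>A signature is given by an arity function ar on operation symbols of type 'f.
  An algebra of that signature is a carrier set S together with an interpretation F
  (F f xs is only relevant when length xs = ar f and set xs is contained in S).\<close>

datatype ('f, 'v) trm = Var 'v | App 'f "('f, 'v) trm list"

fun wf_trm :: "('f \<Rightarrow> nat) \<Rightarrow> ('f, 'v) trm \<Rightarrow> bool" where
  "wf_trm ar (Var v) = True"
| "wf_trm ar (App f ts) = (length ts = ar f \<and> (\<forall>t\<in>set ts. wf_trm ar t))"

primrec eval :: "('f \<Rightarrow> 'a list \<Rightarrow> 'a) \<Rightarrow> ('v \<Rightarrow> 'a) \<Rightarrow> ('f, 'v) trm \<Rightarrow> 'a" where
  "eval F \<rho> (Var v) = \<rho> v"
| "eval F \<rho> (App f ts) = F f (map (eval F \<rho>) ts)"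

definition algebra :: "('f \<Rightarrow> nat) \<Rightarrow> 'a set \<Rightarrow> ('f \<Rightarrow> 'a list \<Rightarrow> 'a) \<Rightarrow> bool" where
  "algebra ar S F \<longleftrightarrow> (\<forall>f xs. length xs = ar f \<and> set xs \<subseteq> S \<longrightarrow> F f xs \<in> S)"

text \<open>A variety is represented by a set E of identities (Birkhoff); membership is Mod(E).\<close>
definition model_of :: "('f \<Rightarrow> nat) \<Rightarrow> (('f, nat) trm \<times> ('f, nat) trm) set
    \<Rightarrow> 'a set \<Rightarrow> ('f \<Rightarrow> 'a list \<Rightarrow> 'a) \<Rightarrow> bool" where
  "model_of ar E S F \<longleftrightarrow> algebra ar S F \<and>
     (\<forall>(s, t)\<in>E. \<forall>\<rho>. range \<rho> \<subseteq> S \<longrightarrow> eval F \<rho> s = eval F \<rho> t)"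

definition Con :: "('f \<Rightarrow> nat) \<Rightarrow> 'a set \<Rightarrow> ('f \<Rightarrow> 'a list \<Rightarrow> 'a) \<Rightarrow> 'a rel set" where
  "Con ar S F = {\<theta>. equiv S \<theta> \<and>
     (\<forall>f xs ys. length xs = ar f \<and> length ys = ar f \<and> list_all2 (\<lambda>x y. (x, y) \<in> \<theta>) xs ys
        \<longrightarrow> (F f xs, F f ys) \<in> \<theta>)}"

definition cjoin :: "('f \<Rightarrow> nat) \<Rightarrow> 'a set \<Rightarrow> ('f \<Rightarrow> 'a list \<Rightarrow> 'a) \<Rightarrow> 'a rel \<Rightarrow> 'a rel \<Rightarrow> 'a rel" where
  "cjoin ar S F \<theta> \<zeta> = \<Inter>{\<phi> \<in> Con ar S F. \<theta> \<union> \<zeta> \<subseteq> \<phi>}"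

text \<open>Term condition C(alpha, beta; delta): variables Inl i are the alpha-variables,
  variables Inr j the beta-variables.\<close>
definition term_cond :: "('f \<Rightarrow> nat) \<Rightarrow> 'a set \<Rightarrow> ('f \<Rightarrow> 'a list \<Rightarrow> 'a)
    \<Rightarrow> 'a rel \<Rightarrow> 'a rel \<Rightarrow> 'a rel \<Rightarrow> bool" where
  "term_cond ar S F \<alpha> \<beta> \<delta> \<longleftrightarrow>
    (\<forall>(t :: ('f, nat + nat) trm) \<rho> \<rho>' \<sigma> \<sigma>'. wf_trm ar t \<longrightarrow>
       (\<forall>i. (\<rho> i, \<rho>' i) \<in> \<alpha>) \<longrightarrow> (\<forall>j. (\<sigma> j, \<sigma>' j) \<in> \<beta>) \<longrightarrow>
       (eval F (case_sum \<rho> \<sigma>) t, eval F (case_sum \<rho> \<sigma>') t) \<in> \<delta> \<longrightarrow>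
       (eval F (case_sum \<rho>' \<sigma>) t, eval F (case_sum \<rho>' \<sigma>') t) \<in> \<delta>)"

definition comm :: "('f \<Rightarrow> nat) \<Rightarrow> 'a set \<Rightarrow> ('f \<Rightarrow> 'a list \<Rightarrow> 'a) \<Rightarrow> 'a rel \<Rightarrow> 'a rel \<Rightarrow> 'a rel" where
  "comm ar S F \<alpha> \<beta> = \<Inter>{\<delta> \<in> Con ar S F. term_cond ar S F \<alpha> \<beta> \<delta>}"

definition prime_con :: "('f \<Rightarrow> nat) \<Rightarrow> 'a set \<Rightarrow> ('f \<Rightarrow> 'a list \<Rightarrow> 'a) \<Rightarrow> 'a rel \<Rightarrow> bool" where
  "prime_con ar S F \<phi> \<longleftrightarrow> \<phi> \<in> Con ar S F \<and> \<phi> \<noteq> S \<times> S \<and>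
     (\<forall>\<theta>\<in>Con ar S F. \<forall>\<zeta>\<in>Con ar S F. comm ar S F \<theta> \<zeta> \<subseteq> \<phi> \<longrightarrow> \<theta> \<subseteq> \<phi> \<or> \<zeta> \<subseteq> \<phi>)"

text \<open>rho_A(theta); the empty intersection is nabla_A.\<close>
definition rad :: "('f \<Rightarrow> nat) \<Rightarrow> 'a set \<Rightarrow> ('f \<Rightarrow> 'a list \<Rightarrow> 'a) \<Rightarrow> 'a rel \<Rightarrow> 'a rel" where
  "rad ar S F \<theta> = (S \<times> S) \<inter> \<Inter>{\<phi>. prime_con ar S F \<phi> \<and> \<theta> \<subseteq> \<phi>}"

definition semiprime :: "('f \<Rightarrow> nat) \<Rightarrow> 'a set \<Rightarrow> ('f \<Rightarrow> 'a list \<Rightarrow> 'a) \<Rightarrow> bool" where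
  "semiprime ar S F \<longleftrightarrow> rad ar S F (Id_on S) = Id_on S"

definition cm_variety :: "('f \<Rightarrow> nat) \<Rightarrow> (('f, nat) trm \<times> ('f, nat) trm) set \<Rightarrow> bool" where
  "cm_variety ar E \<longleftrightarrow>
    (\<forall>(S :: ('f, nat) trm set) F. model_of ar E S F \<longrightarrow>
       (\<forall>\<alpha>\<in>Con ar S F. \<forall>\<beta>\<in>Con ar S F. \<forall>\<gamma>\<in>Con ar S F. \<alpha> \<subseteq> \<gamma> \<longrightarrow>
          cjoin ar S F \<alpha> (\<beta> \<inter> \<gamma>) = cjoin ar S F \<alpha> \<beta> \<inter> \<gamma>))"

definition semi_degenerate :: "('f \<Rightarrow> nat) \<Rightarrow> (('f, nat) trm \<times> ('f, nat) trm) set \<Rightarrow> bool" where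
  "semi_degenerate ar E \<longleftrightarrow>
    (\<forall>(S :: ('f, nat) trm set) F. model_of ar E S F \<longrightarrow> (\<exists>x\<in>S. \<exists>y\<in>S. x \<noteq> y) \<longrightarrow>
       \<not> (\<exists>a\<in>S. \<forall>f. F f (replicate (ar f) a) = a))"

record 'x lat =
  lcar :: "'x set"
  lle :: "'x \<Rightarrow> 'x \<Rightarrow> bool"
  lmeet :: "'x \<Rightarrow> 'x \<Rightarrow> 'x"
  ljoin :: "'x \<Rightarrow> 'x \<Rightarrow> 'x"
  lbot :: "'x"

definition Ann :: "'x lat \<Rightarrow> 'x set \<Rightarrow> 'x set" where
  "Ann L U = {x \<in> lcar L. \<forall>u\<in>U. lmeet L x u = lbot L}"

definition lat_ideal :: "'x lat \<Rightarrow> 'x set \<Rightarrow> bool" where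
  "lat_ideal L I \<longleftrightarrow> I \<subseteq> lcar L \<and> lbot L \<in> I \<and>
     (\<forall>x\<in>I. \<forall>y\<in>lcar L. lle L y x \<longrightarrow> y \<in> I) \<and> (\<forall>x\<in>I. \<forall>y\<in>I. ljoin L x y \<in> I)"

definition gen_ideal :: "'x lat \<Rightarrow> 'x set \<Rightarrow> 'x set" where
  "gen_ideal L V = \<Inter>{I. lat_ideal L I \<and> V \<subseteq> I}"

definition cond_iv :: "'x lat \<Rightarrow> bool" where
  "cond_iv L \<longleftrightarrow> (\<forall>a\<in>lcar L. \<forall>b\<in>lcar L.
     Ann L {lmeet L a b} = gen_ideal L (Ann L {a} \<union> Ann L {b}))"

definition cond4_kappa :: "'x lat \<Rightarrow> 'k set \<Rightarrow> bool" where
  "cond4_kappa L K \<longleftrightarrow> cond_iv L \<and>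
     (\<forall>U. U \<subseteq> lcar L \<and> (card_of U, card_of K) \<in> ordLeq \<longrightarrow> (\<exists>x\<in>lcar L. Ann L (Ann L U) = Ann L {x}))"

definition cond4_fin :: "'x lat \<Rightarrow> bool" where
  "cond4_fin L \<longleftrightarrow> cond_iv L \<and>
     (\<forall>U. U \<subseteq> lcar L \<and> finite U \<longrightarrow> (\<exists>x\<in>lcar L. Ann L (Ann L U) = Ann L {x}))"

definition cond4 :: "'x lat \<Rightarrow> bool" where
  "cond4 L \<longleftrightarrow> cond_iv L \<and>
     (\<forall>U. U \<subseteq> lcar L \<longrightarrow> (\<exists>x\<in>lcar L. Ann L (Ann L U) = Ann L {x}))"

definition ConL :: "('f \<Rightarrow> nat) \<Rightarrow> 'a set \<Rightarrow> ('f \<Rightarrow> 'a list \<Rightarrow> 'a) \<Rightarrow> 'a rel lat" where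
  "ConL ar S F = \<lparr>lcar = Con ar S F, lle = (\<subseteq>), lmeet = (\<inter>), ljoin = cjoin ar S F,
     lbot = Id_on S\<rparr>"

end

theory Submission
  imports Defs
begin

text \<open>In a semiprime algebra the annihilator of any congruence u is closed under arbitrary
  joins: if every member of a family A meets u in \<Delta>, then every prime congruence either
  contains all of A or, since [\<alpha>, u] \<subseteq> \<alpha> \<inter> u = \<Delta> for some \<alpha> \<in> A outside it, contains u;
  so the join of A meets u inside the intersection of all primes, which is \<Delta>.
  Hence Ann(U) is the principal ideal generated by the join P of its members, and
  Ann(Ann(U)) = Ann(P) for every U. The annihilator clause of (4) is thus automatic and all
  four conditions reduce to (iv).\<close>

lemma Con_subset_Times: "\<theta> \<in> Con ar S F \<Longrightarrow> \<theta> \<subseteq> S \<times> S"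
  by (auto simp: Con_def equiv_def refl_on_def)

lemma Id_on_subset_Con: "\<theta> \<in> Con ar S F \<Longrightarrow> Id_on S \<subseteq> \<theta>"
  by (auto simp: Con_def equiv_def refl_on_def)

lemma eval_Con:
  assumes "\<theta> \<in> Con ar S F" and "\<And>v. (\<tau> v, \<tau>' v) \<in> \<theta>"
  shows "wf_trm ar t \<Longrightarrow> (eval F \<tau> t, eval F \<tau>' t) \<in> \<theta>"
proof (induction t)
  case (Var v)
  then show ?case using assms(2) by simp
next
  case (App f ts)
  then have "list_all2 (\<lambda>x y. (x, y) \<in> \<theta>) (map (eval F \<tau>) ts) (map (eval F \<tau>') ts)"
    by (auto simp: list_all2_conv_all_nth)
  with App.prems assms(1) show ?case by (simp add: Con_def)
qed

lemma Con_Inter: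
  assumes "\<Phi> \<noteq> {}" and "\<Phi> \<subseteq> Con ar S F"
  shows "\<Inter>\<Phi> \<in> Con ar S F"
proof -
  have equiv: "equiv S \<phi>" if "\<phi> \<in> \<Phi>" for \<phi>
    using that assms(2) by (auto simp: Con_def)
  have "refl_on S (\<Inter>\<Phi>)"
    using refl_on_INTER[of \<Phi> "\<lambda>_. S" id] equiv assms(1) by (simp add: equiv_def)
  moreover have "\<Inter>\<Phi> \<subseteq> S \<times> S"
    using assms equiv by (auto simp: equiv_def)
  moreover have "sym (\<Inter>\<Phi>)" and "trans (\<Inter>\<Phi>)"
    using sym_INTER[of \<Phi> id] trans_INTER[of \<Phi> id] equiv by (simp_all add: equiv_def)
  moreover have "(F f xs, F f ys) \<in> \<phi>"
    if "\<phi> \<in> \<Phi>" "length xs = ar f" "length ys = ar f"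
      "list_all2 (\<lambda>x y. (x, y) \<in> \<Inter>\<Phi>) xs ys" for \<phi> f xs ys
  proof -
    from that(4) have "list_all2 (\<lambda>x y. (x, y) \<in> \<phi>) xs ys"
      by (rule list_all2_mono) (use that(1) in blast)
    with that(1-3) assms(2) show ?thesis by (auto simp: Con_def)
  qed
  ultimately show ?thesis
    unfolding Con_def equiv_def by blast
qed

lemma Con_Int: "\<alpha> \<in> Con ar S F \<Longrightarrow> \<beta> \<in> Con ar S F \<Longrightarrow> \<alpha> \<inter> \<beta> \<in> Con ar S F"
  using Con_Inter[of "{\<alpha>, \<beta>}" ar S F] by simp

lemma Times_in_Con:
  fixes S :: "'a set"
  assumes "algebra ar S F"
  shows "S \<times> S \<in> Con ar S F"
proof -
  have "set xs \<subseteq> S \<and> set ys \<subseteq> S"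
    if "list_all2 (\<lambda>x y. (x, y) \<in> S \<times> S) xs ys" for xs ys :: "'a list"
    using that by (auto simp: list_all2_conv_all_nth in_set_conv_nth)
  with assms show ?thesis
    by (auto simp: Con_def algebra_def equiv_def refl_on_def sym_def trans_def)
qed

definition Cg :: "('f \<Rightarrow> nat) \<Rightarrow> 'a set \<Rightarrow> ('f \<Rightarrow> 'a list \<Rightarrow> 'a) \<Rightarrow> 'a rel \<Rightarrow> 'a rel" where
  "Cg ar S F R = \<Inter>{\<phi> \<in> Con ar S F. R \<subseteq> \<phi>}"

lemma Cg_in_Con: "algebra ar S F \<Longrightarrow> R \<subseteq> S \<times> S \<Longrightarrow> Cg ar S F R \<in> Con ar S F"
  unfolding Cg_def by (rule Con_Inter) (use Times_in_Con in blast)+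

lemma subset_Cg: "R \<subseteq> Cg ar S F R"
  by (auto simp: Cg_def)

lemma Cg_least: "\<phi> \<in> Con ar S F \<Longrightarrow> R \<subseteq> \<phi> \<Longrightarrow> Cg ar S F R \<subseteq> \<phi>"
  by (auto simp: Cg_def)

lemma term_cond_Int:
  assumes \<alpha>: "\<alpha> \<in> Con ar S F" and \<beta>: "\<beta> \<in> Con ar S F"
  shows "term_cond ar S F \<alpha> \<beta> (\<alpha> \<inter> \<beta>)"
  unfolding term_cond_def
proof (intro allI impI)
  fix t \<rho> \<rho>' \<sigma> \<sigma>'
  assume wf: "wf_trm ar t" and "\<forall>i. (\<rho> i, \<rho>' i) \<in> \<alpha>" and "\<forall>j. (\<sigma> j, \<sigma>' j) \<in> \<beta>"
    and prem: "(eval F (case_sum \<rho> \<sigma>) t, eval F (case_sum \<rho> \<sigma>') t) \<in> \<alpha> \<inter> \<beta>"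
  then have \<rho>: "(\<rho> i, \<rho>' i) \<in> \<alpha>" and \<sigma>: "(\<sigma> j, \<sigma>' j) \<in> \<beta>" for i j
    by blast+
  have refl: "(x, x) \<in> \<alpha>" "(x, x) \<in> \<beta>" if "x \<in> S" for x
    using that Id_on_subset_Con[OF \<alpha>] Id_on_subset_Con[OF \<beta>] by auto
  have \<rho>'S: "\<rho>' i \<in> S" and \<sigma>S: "\<sigma> j \<in> S" "\<sigma>' j \<in> S" for i j
    using \<rho> \<sigma> Con_subset_Times[OF \<alpha>] Con_subset_Times[OF \<beta>] by blast+
  have change_\<rho>: "(eval F (case_sum \<rho> \<tau>) t, eval F (case_sum \<rho>' \<tau>) t) \<in> \<alpha>"
    if "\<And>j. \<tau> j \<in> S" for \<tau>
    by (rule eval_Con[OF \<alpha> _ wf]) (use \<rho> refl that in \<open>simp split: sum.split\<close>)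
  have "(eval F (case_sum \<rho>' \<sigma>) t, eval F (case_sum \<rho>' \<sigma>') t) \<in> \<beta>"
    by (rule eval_Con[OF \<beta> _ wf]) (use \<sigma> refl \<rho>'S in \<open>simp split: sum.split\<close>)
  moreover have "(eval F (case_sum \<rho>' \<sigma>) t, eval F (case_sum \<rho>' \<sigma>') t) \<in> \<alpha>"
  proof -
    have "sym \<alpha>" "trans \<alpha>"
      using \<alpha> by (simp_all add: Con_def equiv_def)
    moreover have "(eval F (case_sum \<rho>' \<sigma>) t, eval F (case_sum \<rho> \<sigma>) t) \<in> \<alpha>"
      using change_\<rho>[of \<sigma>] \<sigma>S \<open>sym \<alpha>\<close> by (blast dest: symD)
    ultimately show ?thesis
      using prem change_\<rho>[of \<sigma>'] \<sigma>S by (blast dest: transD)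
  qed
  ultimately show "(eval F (case_sum \<rho>' \<sigma>) t, eval F (case_sum \<rho>' \<sigma>') t) \<in> \<alpha> \<inter> \<beta>"
    by blast
qed

lemma comm_subset_Int:
  "\<alpha> \<in> Con ar S F \<Longrightarrow> \<beta> \<in> Con ar S F \<Longrightarrow> comm ar S F \<alpha> \<beta> \<subseteq> \<alpha> \<inter> \<beta>"
  unfolding comm_def by (rule Inter_lower) (simp add: Con_Int term_cond_Int)

lemma prime_conD:
  "prime_con ar S F \<phi> \<Longrightarrow> \<theta> \<in> Con ar S F \<Longrightarrow> \<zeta> \<in> Con ar S F \<Longrightarrow>
    comm ar S F \<theta> \<zeta> \<subseteq> \<phi> \<Longrightarrow> \<theta> \<subseteq> \<phi> \<or> \<zeta> \<subseteq> \<phi>"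
  by (simp add: prime_con_def)

lemma semiprime_subset_Id_on:
  assumes "semiprime ar S F" and "\<theta> \<subseteq> S \<times> S"
    and "\<And>\<phi>. prime_con ar S F \<phi> \<Longrightarrow> \<theta> \<subseteq> \<phi>"
  shows "\<theta> \<subseteq> Id_on S"
proof -
  have "\<theta> \<subseteq> rad ar S F (Id_on S)"
    using assms(2,3) by (auto simp: rad_def)
  with assms(1) show ?thesis by (simp add: semiprime_def)
qed

lemma semiprime_Cg_Union_Int_eq_Id_on:
  assumes alg: "algebra ar S F" and sp: "semiprime ar S F"
    and A: "A \<subseteq> Con ar S F" and u: "u \<in> Con ar S F"
    and disjoint: "\<And>\<alpha>. \<alpha> \<in> A \<Longrightarrow> \<alpha> \<inter> u = Id_on S"
  shows "Cg ar S F (\<Union>A) \<inter> u = Id_on S"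
proof
  have "\<Union>A \<subseteq> S \<times> S"
    using A by (auto dest: Con_subset_Times)
  then have "Cg ar S F (\<Union>A) \<in> Con ar S F"
    by (rule Cg_in_Con[OF alg])
  then show "Id_on S \<subseteq> Cg ar S F (\<Union>A) \<inter> u"
    using Id_on_subset_Con[OF u] by (simp add: Id_on_subset_Con)
  show "Cg ar S F (\<Union>A) \<inter> u \<subseteq> Id_on S"
  proof (rule semiprime_subset_Id_on[OF sp])
    show "Cg ar S F (\<Union>A) \<inter> u \<subseteq> S \<times> S"
      using Con_subset_Times[OF u] by blast
    fix \<phi> assume prime: "prime_con ar S F \<phi>"
    then have \<phi>: "\<phi> \<in> Con ar S F"
      by (simp add: prime_con_def)
    show "Cg ar S F (\<Union>A) \<inter> u \<subseteq> \<phi>"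
    proof (cases "\<Union>A \<subseteq> \<phi>")
      case True
      then show ?thesis
        using Cg_least[OF \<phi>] by blast
    next
      case False
      then obtain \<alpha> where \<alpha>: "\<alpha> \<in> A" "\<not> \<alpha> \<subseteq> \<phi>"
        by blast
      with A have "\<alpha> \<in> Con ar S F"
        by blast
      have "comm ar S F \<alpha> u \<subseteq> \<alpha> \<inter> u"
        using comm_subset_Int[OF \<open>\<alpha> \<in> Con ar S F\<close> u] .
      also have "\<dots> \<subseteq> \<phi>"
        using disjoint[OF \<alpha>(1)] Id_on_subset_Con[OF \<phi>] by simp
      finally have "u \<subseteq> \<phi>"
        using prime_conD[OF prime \<open>\<alpha> \<in> Con ar S F\<close> u] \<alpha>(2) by blast
      then show ?thesis
        by blast
    qed
  qed
qed

lemma lcar_ConL: "lcar (ConL ar S F) = Con ar S F"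
  by (simp add: ConL_def)

lemma Ann_ConL: "Ann (ConL ar S F) U = {\<theta> \<in> Con ar S F. \<forall>u\<in>U. \<theta> \<inter> u = Id_on S}"
  by (simp add: Ann_def ConL_def)

lemma semiprime_Ann_Ann_principal:
  assumes alg: "algebra ar S F" and sp: "semiprime ar S F" and U: "U \<subseteq> Con ar S F"
  shows "\<exists>x\<in>Con ar S F. Ann (ConL ar S F) (Ann (ConL ar S F) U) = Ann (ConL ar S F) {x}"
proof -
  let ?A = "Ann (ConL ar S F) U"
  define P where "P = Cg ar S F (\<Union>?A)"
  have A: "?A \<subseteq> Con ar S F"
    by (auto simp: Ann_ConL)
  then have "\<Union>?A \<subseteq> S \<times> S"
    by (auto dest: Con_subset_Times)
  then have P: "P \<in> Con ar S F"
    unfolding P_def by (rule Cg_in_Con[OF alg])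
  have "P \<inter> u = Id_on S" if "u \<in> U" for u
    unfolding P_def
    by (rule semiprime_Cg_Union_Int_eq_Id_on[OF alg sp A]) (use that U in \<open>auto simp: Ann_ConL\<close>)
  with P have "P \<in> ?A"
    by (simp add: Ann_ConL)
  have "(\<forall>\<theta>\<in>?A. x \<inter> \<theta> = Id_on S) \<longleftrightarrow> x \<inter> P = Id_on S" if x: "x \<in> Con ar S F" for x
  proof
    assume "x \<inter> P = Id_on S"
    moreover have "\<theta> \<subseteq> P" if "\<theta> \<in> ?A" for \<theta>
      using that subset_Cg unfolding P_def by blast
    ultimately show "\<forall>\<theta>\<in>?A. x \<inter> \<theta> = Id_on S"
      using A Id_on_subset_Con[OF x] by (blast dest: Id_on_subset_Con)
  qed (use \<open>P \<in> ?A\<close> in blast)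
  then have "Ann (ConL ar S F) ?A = Ann (ConL ar S F) {P}"
    by (auto simp: Ann_ConL[of ar S F ?A] Ann_ConL[of ar S F "{P}"])
  with P show ?thesis
    by blast
qed

theorem proposition2p27:
  fixes ar :: "'f \<Rightarrow> nat"
    and E :: "(('f, nat) trm \<times> ('f, nat) trm) set"
    and S :: "'a set" and F :: "'f \<Rightarrow> 'a list \<Rightarrow> 'a"
    and K :: "'k set"
  assumes "\<forall>(s, t)\<in>E. wf_trm ar s \<and> wf_trm ar t"
    and "cm_variety ar E"
    and "semi_degenerate ar E"
    and "model_of ar E S F"
    and "semiprime ar S F"
    and "K \<noteq> {}"
  shows "(cond_iv (ConL ar S F) \<longleftrightarrow> cond4_kappa (ConL ar S F) K)
       \<and> (cond4_kappa (ConL ar S F) K \<longleftrightarrow> cond4_fin (ConL ar S F))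
       \<and> (cond4_fin (ConL ar S F) \<longleftrightarrow> cond4 (ConL ar S F))"
proof -
  have "algebra ar S F"
    using \<open>model_of ar E S F\<close> by (simp add: model_of_def)
  then have "\<exists>x\<in>lcar (ConL ar S F). Ann (ConL ar S F) (Ann (ConL ar S F) U) = Ann (ConL ar S F) {x}"
    if "U \<subseteq> lcar (ConL ar S F)" for U
    using semiprime_Ann_Ann_principal \<open>semiprime ar S F\<close> that by (simp add: lcar_ConL)
  then show ?thesis
    unfolding cond4_kappa_def cond4_fin_def cond4_def by blast
qed

end
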